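(* Let $\mathcal{T}$ be a tangle of order $k$ in a connectivity system $(E,\lambda)$, and let $(A, B)$ and $(C, D)$ be two non-sequential $k$-separations of $\lambda$. Then $(A, B)$ is $\mathcal{T}$-equivalent to $(C, D)$ if and only if either $\mathrm{fcl}_{\mathcal{T}}(A)= \mathrm{fcl}_{\mathcal{T}}(C)$ or $\mathrm{fcl}_{\mathcal{T}}(A)= \mathrm{fcl}_{\mathcal{T}}(D)$.
   Context: A connectivity system is a pair $(E,\lambda)$ with $E$ finite and $\lambda$ an integer-valued symmetric submodular function on subsets of $E$. $X$ is $k$-separating if $\lambda(X)\le k$; a $k$-separation is an unordered partition $(X,E-X)$ with $\lambda(X)\le k$. A tangle of order $k$ is a collection $\mathcal T$ of subsets of $E$ with (T1) $\lambda(A)<k$ for $A\in\mathcal T$; (T2) if $\lambda(A)\le k-1$ then $A\in\mathcal T$ or $E-A\in\mathcal T$; (T3) $A\cup B\cup C\ne E$ for $A,B,C\in\mathcal T$; (T4) $E-\{e\}\notin\mathcal T$ for $e\in E$. A set is $\mathcal T$-weak if contained in a member of $\mathcal T$, and $\mathcal T$-strong otherwise. A $\mathcal T$-strong $k$-separating set $X$ is fully closed if $X\cup Y$ is not $k$-separating for every nonempty $\mathcal T$-weak $Y\subseteq E-X$; $\mathrm{fcl}_{\mathcal T}(X)$ is the intersection of all fully closed $k$-separating sets containing $X$. $\mathcal T$-strong $k$-separations $(X,Y),(X',Y')$ are $\mathcal T$-equivalent if $\{\mathrm{fcl}_{\mathcal T}(X),\mathrm{fcl}_{\mathcal T}(Y)\}=\{\mathrm{fcl}_{\mathcal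 T}(X'),\mathrm{fcl}_{\mathcal T}(Y')\}$. A $k$-separating set $X$ is $\mathcal T$-sequential if $E-X$ is $\mathcal T$-strong and $\mathrm{fcl}_{\mathcal T}(E-X)=E$; a $k$-separation is non-sequential if neither of its parts is $\mathcal T$-sequential (such separations are $\mathcal T$-strong). *)

theory Defs
  imports Main
begin

definition connectivity_system :: "'a set \<Rightarrow> ('a set \<Rightarrow> int) \<Rightarrow> bool" where
  "connectivity_system E lam \<longleftrightarrow> finite E \<and>
     (\<forall>X\<subseteq>E. lam X = lam (E - X)) \<and>
     (\<forall>X\<subseteq>E. \<forall>Y\<subseteq>E. lam X + lam Y \<ge> lam (X \<union> Y) + lam (X \<inter> Y))"

definition k_separating :: "('a set \<Rightarrow> int) \<Rightarrow> int \<Rightarrow> 'a set \<Rightarrow> bool" where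
  "k_separating lam k X \<longleftrightarrow> lam X \<le> k"

text \<open>A k-separation (X, Y): a partition of E with X separating. Represented as an
  ordered pair with Y = E - X; symmetry makes the unordered reading equivalent.\<close>
definition k_separation :: "'a set \<Rightarrow> ('a set \<Rightarrow> int) \<Rightarrow> int \<Rightarrow> 'a set \<Rightarrow> 'a set \<Rightarrow> bool" where
  "k_separation E lam k X Y \<longleftrightarrow> X \<subseteq> E \<and> Y = E - X \<and> lam X \<le> k"

definition tangle :: "'a set \<Rightarrow> ('a set \<Rightarrow> int) \<Rightarrow> int \<Rightarrow> 'a set set \<Rightarrow> bool" where
  "tangle E lam k T \<longleftrightarrow>
     (\<forall>A\<in>T. A \<subseteq> E) \<and>
     (\<forall>A\<in>T. lam A < k) \<and>
     (\<forall>A\<subseteq>E. lam A \<le> k - 1 \<longrightarrow> A \<in> T \<or> E - A \<in> T) \<and>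
     (\<forall>A\<in>T. \<forall>B\<in>T. \<forall>C\<in>T. A \<union> B \<union> C \<noteq> E) \<and>
     (\<forall>e\<in>E. E - {e} \<notin> T)"

definition T_weak :: "'a set set \<Rightarrow> 'a set \<Rightarrow> bool" where
  "T_weak T X \<longleftrightarrow> (\<exists>A\<in>T. X \<subseteq> A)"

definition T_strong :: "'a set set \<Rightarrow> 'a set \<Rightarrow> bool" where
  "T_strong T X \<longleftrightarrow> \<not> T_weak T X"

definition fully_closed :: "'a set \<Rightarrow> ('a set \<Rightarrow> int) \<Rightarrow> int \<Rightarrow> 'a set set \<Rightarrow> 'a set \<Rightarrow> bool" where
  "fully_closed E lam k T X \<longleftrightarrow> X \<subseteq> E \<and> T_strong T X \<and> k_separating lam k X \<and>
     (\<forall>Y. Y \<subseteq> E - X \<and> Y \<noteq> {} \<and> T_weak T Y \<longrightarrow> \<not> k_separating lam k (X \<union> Y))"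

text \<open>Intersection of all fully closed k-separating sets containing X (within E;
  the empty intersection is E).\<close>
definition fcl :: "'a set \<Rightarrow> ('a set \<Rightarrow> int) \<Rightarrow> int \<Rightarrow> 'a set set \<Rightarrow> 'a set \<Rightarrow> 'a set" where
  "fcl E lam k T X = E \<inter> \<Inter>{Z. fully_closed E lam k T Z \<and> X \<subseteq> Z}"

definition T_equivalent :: "'a set \<Rightarrow> ('a set \<Rightarrow> int) \<Rightarrow> int \<Rightarrow> 'a set set \<Rightarrow>
    'a set \<Rightarrow> 'a set \<Rightarrow> 'a set \<Rightarrow> 'a set \<Rightarrow> bool" where
  "T_equivalent E lam k T X Y X' Y' \<longleftrightarrow>
     {fcl E lam k T X, fcl E lam k T Y} = {fcl E lam k T X', fcl E lam k T Y'}"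

definition T_sequential :: "'a set \<Rightarrow> ('a set \<Rightarrow> int) \<Rightarrow> int \<Rightarrow> 'a set set \<Rightarrow> 'a set \<Rightarrow> bool" where
  "T_sequential E lam k T X \<longleftrightarrow> X \<subseteq> E \<and> k_separating lam k X \<and>
     T_strong T (E - X) \<and> fcl E lam k T (E - X) = E"

definition non_sequential :: "'a set \<Rightarrow> ('a set \<Rightarrow> int) \<Rightarrow> int \<Rightarrow> 'a set set \<Rightarrow> 'a set \<Rightarrow> 'a set \<Rightarrow> bool" where
  "non_sequential E lam k T X Y \<longleftrightarrow> k_separation E lam k X Y \<and>
     \<not> T_sequential E lam k T X \<and> \<not> T_sequential E lam k T Y"

end

theory Submission
  imports Defs
begin

text \<open>The full closure of a \<open>\<T>\<close>-strong \<open>k\<close>-separating set \<open>X\<close> is obtained by repeatedly adding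
  \<open>\<T>\<close>-weak sets as long as the result stays \<open>k\<close>-separating: submodularity and axiom (T2) show
  that every fully closed set containing \<open>X\<close> absorbs each added piece. Running the same
  absorption argument on complements gives \<open>fcl (E - X) = fcl (E - fcl X)\<close> whenever
  \<open>fcl X \<noteq> E\<close>. For a non-sequential separation \<open>(A, B)\<close> this says that \<open>fcl B\<close> is determined
  by \<open>fcl A\<close>, so two such separations are equivalent as soon as one side of each has the same
  full closure.\<close>

lemma connectivity_system_compl:
  "connectivity_system E lam \<Longrightarrow> X \<subseteq> E \<Longrightarrow> lam (E - X) = lam X"
  unfolding connectivity_system_def by metis

lemma connectivity_system_submodular:
  "connectivity_system E lam \<Longrightarrow> X \<subseteq> E \<Longrightarrow> Y \<subseteq> E \<Longrightarrow>
    lam (X \<union> Y) + lam (X \<inter> Y) \<le> lam X + lam Y"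
  unfolding connectivity_system_def by blast

lemma connectivity_system_ground_le:
  assumes cs: "connectivity_system E lam" and X: "X \<subseteq> E"
  shows "lam E \<le> lam X"
proof -
  have "lam E = lam {}"
    using connectivity_system_compl[OF cs, of E] by simp
  moreover have "lam (X \<union> (E - X)) + lam (X \<inter> (E - X)) \<le> lam X + lam (E - X)"
    using connectivity_system_submodular[OF cs X, of "E - X"] by blast
  moreover have "X \<union> (E - X) = E" "X \<inter> (E - X) = {}"
    using X by auto
  ultimately show ?thesis
    using connectivity_system_compl[OF cs X] by simp
qed

lemma T_weak_subset: "T_weak T Y \<Longrightarrow> X \<subseteq> Y \<Longrightarrow> T_weak T X"
  unfolding T_weak_def by blast

lemma T_strong_superset: "T_strong T X \<Longrightarrow> X \<subseteq> Y \<Longrightarrow> T_strong T Y"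
  unfolding T_strong_def T_weak_def by blast

lemma tangle_member_or_compl:
  "tangle E lam k T \<Longrightarrow> A \<subseteq> E \<Longrightarrow> lam A \<le> k - 1 \<Longrightarrow> A \<in> T \<or> E - A \<in> T"
  by (simp add: tangle_def)

lemma tangle_member_subset: "tangle E lam k T \<Longrightarrow> A \<in> T \<Longrightarrow> A \<subseteq> E"
  by (simp add: tangle_def)

lemma tangle_no_cover:
  "tangle E lam k T \<Longrightarrow> A \<in> T \<Longrightarrow> B \<in> T \<Longrightarrow> C \<in> T \<Longrightarrow> A \<union> B \<union> C \<noteq> E"
  by (simp add: tangle_def)

lemma tangle_compl_strong_if_weak:
  assumes tg: "tangle E lam k T" and "T_weak T X"
  shows "T_strong T (E - X)"
proof (rule ccontr)
  assume "\<not> T_strong T (E - X)"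
  then obtain M2 where "M2 \<in> T" "E - X \<subseteq> M2"
    unfolding T_strong_def T_weak_def by blast
  moreover obtain M1 where "M1 \<in> T" "X \<subseteq> M1"
    using \<open>T_weak T X\<close> unfolding T_weak_def by blast
  ultimately have "M1 \<union> M2 \<union> M2 = E"
    using tangle_member_subset[OF tg] by blast
  then show False
    using tangle_no_cover[OF tg \<open>M1 \<in> T\<close> \<open>M2 \<in> T\<close> \<open>M2 \<in> T\<close>] by blast
qed

lemma fully_closedD:
  assumes "fully_closed E lam k T Z"
  shows "Z \<subseteq> E" "T_strong T Z" "lam Z \<le> k"
    "\<And>Y. Y \<subseteq> E - Z \<Longrightarrow> Y \<noteq> {} \<Longrightarrow> T_weak T Y \<Longrightarrow> k < lam (Z \<union> Y)"
  using assms unfolding fully_closed_def k_separating_def not_le[symmetric] by blast+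

text \<open>If \<open>S\<close> stuck out of \<open>Z\<close>, then \<open>Z \<union> S\<close> would not be \<open>k\<close>-separating, so by submodularity
  \<open>\<lambda>(Z \<inter> S) < k\<close>; as \<open>Z \<inter> S\<close> is strong, (T2) puts its complement in \<open>\<T>\<close>, making \<open>E - Z\<close>
  weak, and then \<open>\<lambda>(E) > k\<close>, which is impossible.\<close>

lemma subset_fully_closed_if_weak_diff:
  assumes cs: "connectivity_system E lam" and tg: "tangle E lam k T"
    and Z: "fully_closed E lam k T Z" and SE: "S \<subseteq> E" and lS: "lam S \<le> k"
    and strong: "T_strong T (Z \<inter> S)" and weak: "T_weak T (S - Z)"
  shows "S \<subseteq> Z"
proof (rule ccontr)
  assume not_sub: "\<not> S \<subseteq> Z"
  note Z_facts = fully_closedD[OF Z]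
  have "k < lam (Z \<union> (S - Z))"
    using Z_facts(4)[of "S - Z"] not_sub weak SE by blast
  then have "k < lam (Z \<union> S)"
    by (simp add: Un_Diff_cancel)
  then have "lam (Z \<inter> S) \<le> k - 1"
    using connectivity_system_submodular[OF cs Z_facts(1) SE] Z_facts(3) lS by linarith
  moreover have "Z \<inter> S \<notin> T"
    using strong unfolding T_strong_def T_weak_def by blast
  ultimately have "E - (Z \<inter> S) \<in> T"
    using tangle_member_or_compl[OF tg, of "Z \<inter> S"] Z_facts(1) by blast
  then have "T_weak T (E - Z)"
    unfolding T_weak_def by (intro bexI[of _ "E - (Z \<inter> S)"]) auto
  moreover have "E - Z \<noteq> {}"
    using not_sub SE by blast
  ultimately have "k < lam (Z \<union> (E - Z))"
    using Z_facts(4)[of "E - Z"] by blast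
  moreover have "Z \<union> (E - Z) = E"
    using Z_facts(1) by blast
  ultimately have "k < lam E"
    by simp
  then show False
    using connectivity_system_ground_le[OF cs Z_facts(1)] Z_facts(3) by linarith
qed

inductive weak_extension ::
    "'a set \<Rightarrow> ('a set \<Rightarrow> int) \<Rightarrow> int \<Rightarrow> 'a set set \<Rightarrow> 'a set \<Rightarrow> 'a set \<Rightarrow> bool"
  for E lam k T X where
  refl: "weak_extension E lam k T X X"
| step: "weak_extension E lam k T X Y \<Longrightarrow> T_weak T W \<Longrightarrow> Y \<union> W \<subseteq> E \<Longrightarrow>
    lam (Y \<union> W) \<le> k \<Longrightarrow> weak_extension E lam k T X (Y \<union> W)"

lemma weak_extensionD:
  "weak_extension E lam k T X Y \<Longrightarrow> X \<subseteq> E \<Longrightarrow> lam X \<le> k \<Longrightarrow>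
    X \<subseteq> Y \<and> Y \<subseteq> E \<and> lam Y \<le> k"
  by (induction rule: weak_extension.induct) auto

lemma weak_extension_subset_fully_closed:
  assumes cs: "connectivity_system E lam" and tg: "tangle E lam k T"
    and Z: "fully_closed E lam k T Z" and XZ: "X \<subseteq> Z"
    and XE: "X \<subseteq> E" and lX: "lam X \<le> k" and sX: "T_strong T X"
  shows "weak_extension E lam k T X Y \<Longrightarrow> Y \<subseteq> Z"
proof (induction rule: weak_extension.induct)
  case refl
  show ?case by (fact XZ)
next
  case (step Y W)
  have "X \<subseteq> Y"
    using weak_extensionD[OF step.hyps(1) XE lX] by blast
  show ?case
  proof (rule subset_fully_closed_if_weak_diff[OF cs tg Z step.hyps(3,4)])
    show "T_strong T (Z \<inter> (Y \<union> W))"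
      by (rule T_strong_superset[OF sX]) (use \<open>X \<subseteq> Y\<close> step.IH in blast)
    show "T_weak T (Y \<union> W - Z)"
      by (rule T_weak_subset[OF step.hyps(2)]) (use step.IH in blast)
  qed
qed

lemma weak_extension_compl_subset_fully_closed:
  assumes cs: "connectivity_system E lam" and tg: "tangle E lam k T"
    and Z: "fully_closed E lam k T Z" and XE: "X \<subseteq> E" and lX: "lam X \<le> k"
  shows "weak_extension E lam k T X Y \<Longrightarrow> T_strong T (E - Y) \<Longrightarrow> E - Y \<subseteq> Z \<Longrightarrow>
    E - X \<subseteq> Z"
proof (induction rule: weak_extension.induct)
  case refl
  then show ?case by simp
next
  case (step Y W)
  have "Y \<subseteq> E" "lam Y \<le> k"
    using weak_extensionD[OF step.hyps(1) XE lX] by auto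
  then have "lam (E - Y) \<le> k"
    using connectivity_system_compl[OF cs] by simp
  have strong_Y: "T_strong T (E - Y)"
    by (rule T_strong_superset[OF step.prems(1)]) blast
  have "E - Y \<subseteq> Z"
  proof (rule subset_fully_closed_if_weak_diff[OF cs tg Z _ \<open>lam (E - Y) \<le> k\<close>])
    show "T_strong T (Z \<inter> (E - Y))"
      by (rule T_strong_superset[OF step.prems(1)]) (use step.prems(2) in blast)
    show "T_weak T (E - Y - Z)"
      by (rule T_weak_subset[OF step.hyps(2)]) (use step.prems(2) in blast)
  qed blast
  then show ?case
    using step.IH strong_Y by blast
qed

text \<open>A \<open>\<subseteq>\<close>-maximal weak extension is fully closed; by the previous lemmas it is the least fully
  closed set containing \<open>X\<close>.\<close>

lemma fcl_weak_extension:
  assumes cs: "connectivity_system E lam" and tg: "tangle E lam k T"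
    and XE: "X \<subseteq> E" and lX: "lam X \<le> k" and sX: "T_strong T X"
  shows "weak_extension E lam k T X (fcl E lam k T X)"
    and "fully_closed E lam k T (fcl E lam k T X)"
proof -
  let ?F = "{Y. weak_extension E lam k T X Y}"
  have "?F \<subseteq> Pow E"
    using weak_extensionD XE lX by blast
  then have "finite ?F"
    using cs unfolding connectivity_system_def by (blast intro: finite_subset)
  moreover have "X \<in> ?F"
    by (simp add: weak_extension.refl)
  ultimately obtain Y where ext: "weak_extension E lam k T X Y"
    and maximal: "\<And>Y'. weak_extension E lam k T X Y' \<Longrightarrow> Y \<subseteq> Y' \<Longrightarrow> Y' = Y"
    using finite_has_maximal[of ?F] by blast
  have Y: "X \<subseteq> Y" "Y \<subseteq> E" "lam Y \<le> k"
    using weak_extensionD[OF ext XE lX] by auto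
  have closed: "fully_closed E lam k T Y"
    unfolding fully_closed_def k_separating_def
  proof (intro conjI allI impI)
    show "T_strong T Y"
      using T_strong_superset[OF sX Y(1)] .
    fix W assume W: "W \<subseteq> E - Y \<and> W \<noteq> {} \<and> T_weak T W"
    show "\<not> lam (Y \<union> W) \<le> k"
    proof
      assume "lam (Y \<union> W) \<le> k"
      then have "weak_extension E lam k T X (Y \<union> W)"
        using weak_extension.step[OF ext] W Y(2) by blast
      then show False
        using maximal[of "Y \<union> W"] W by blast
    qed
  qed (use Y in auto)
  have "fcl E lam k T X = Y"
    using weak_extension_subset_fully_closed[OF cs tg _ _ XE lX sX ext] Y closed
    unfolding fcl_def by blast
  then show "weak_extension E lam k T X (fcl E lam k T X)"
    and "fully_closed E lam k T (fcl E lam k T X)"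
    using ext closed by simp_all
qed

lemma fcl_compl_eq_fcl_compl_fcl:
  assumes cs: "connectivity_system E lam" and tg: "tangle E lam k T"
    and XE: "X \<subseteq> E" and lX: "lam X \<le> k" and sX: "T_strong T X"
    and proper: "fcl E lam k T X \<noteq> E"
  shows "fcl E lam k T (E - X) = fcl E lam k T (E - fcl E lam k T X)"
proof -
  let ?Y = "fcl E lam k T X"
  have ext: "weak_extension E lam k T X ?Y" and closed: "fully_closed E lam k T ?Y"
    using fcl_weak_extension[OF cs tg XE lX sX] by auto
  have Y: "X \<subseteq> ?Y" "?Y \<subseteq> E" "lam ?Y \<le> k"
    using weak_extensionD[OF ext XE lX] by auto
  have "T_strong T (E - ?Y)"
  proof (rule ccontr)
    assume "\<not> T_strong T (E - ?Y)"
    then have "T_weak T (E - ?Y)"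
      unfolding T_strong_def by simp
    moreover have "T_strong T (?Y \<inter> E)"
      by (rule T_strong_superset[OF sX]) (use Y in blast)
    moreover have "lam E \<le> k"
      using connectivity_system_ground_le[OF cs Y(2)] Y(3) by simp
    ultimately have "E \<subseteq> ?Y"
      using subset_fully_closed_if_weak_diff[OF cs tg closed subset_refl] by blast
    then show False
      using proper Y(2) by blast
  qed
  then have "fully_closed E lam k T Z \<and> E - X \<subseteq> Z \<longleftrightarrow> fully_closed E lam k T Z \<and> E - ?Y \<subseteq> Z"
    for Z
    using weak_extension_compl_subset_fully_closed[OF cs tg _ XE lX ext] Y(1) by blast
  then show ?thesis
    unfolding fcl_def by simp
qed

lemma T_sequential_if_T_weak:
  assumes cs: "connectivity_system E lam" and tg: "tangle E lam k T"
    and XE: "X \<subseteq> E" and lX: "lam X \<le> k" and wX: "T_weak T X"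
  shows "T_sequential E lam k T X"
proof -
  have strong: "T_strong T (E - X)"
    using tangle_compl_strong_if_weak[OF tg wX] .
  have "lam E \<le> k"
    using connectivity_system_ground_le[OF cs XE] lX by simp
  have "E \<subseteq> Z" if Z: "fully_closed E lam k T Z" and sub: "E - X \<subseteq> Z" for Z
  proof (rule subset_fully_closed_if_weak_diff[OF cs tg Z subset_refl \<open>lam E \<le> k\<close>])
    show "T_strong T (Z \<inter> E)"
      by (rule T_strong_superset[OF strong]) (use sub in blast)
    show "T_weak T (E - Z)"
      by (rule T_weak_subset[OF wX]) (use sub in blast)
  qed
  then have "fcl E lam k T (E - X) = E"
    unfolding fcl_def by blast
  then show ?thesis
    unfolding T_sequential_def k_separating_def using XE lX strong by blast
qed

lemma non_sequential_sym:
  assumes cs: "connectivity_system E lam" and ns: "non_sequential E lam k T A B"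
  shows "non_sequential E lam k T B A"
proof -
  have "A \<subseteq> E" "B = E - A" "lam A \<le> k"
    using ns unfolding non_sequential_def k_separation_def by auto
  then have "A = E - B" "lam B \<le> k"
    using connectivity_system_compl[OF cs] by auto
  then show ?thesis
    using ns \<open>B = E - A\<close> unfolding non_sequential_def k_separation_def by auto
qed

lemma non_sequential_fcl_eq:
  assumes cs: "connectivity_system E lam" and tg: "tangle E lam k T"
    and ns: "non_sequential E lam k T A B"
  shows "fcl E lam k T B = fcl E lam k T (E - fcl E lam k T A)"
proof -
  have AE: "A \<subseteq> E" and B: "B = E - A" and lA: "lam A \<le> k"
    and not_seq: "\<not> T_sequential E lam k T A" "\<not> T_sequential E lam k T B"
    using ns unfolding non_sequential_def k_separation_def by auto
  have sA: "T_strong T A"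
    using T_sequential_if_T_weak[OF cs tg AE lA] not_seq(1) unfolding T_strong_def by blast
  have "E - B = A" "lam B \<le> k"
    using AE B lA connectivity_system_compl[OF cs AE] by auto
  then have "fcl E lam k T A \<noteq> E"
    using not_seq(2) sA B unfolding T_sequential_def k_separating_def by auto
  then show ?thesis
    using fcl_compl_eq_fcl_compl_fcl[OF cs tg AE lA sA] B by simp
qed

theorem lemma3p7:
  fixes E :: "'a set" and lam :: "'a set \<Rightarrow> int" and k :: int and T :: "'a set set"
    and A B C D :: "'a set"
  assumes "connectivity_system E lam"
    and "tangle E lam k T"
    and "non_sequential E lam k T A B"
    and "non_sequential E lam k T C D"
  shows "T_equivalent E lam k T A B C D \<longleftrightarrow>
         (fcl E lam k T A = fcl E lam k T C \<or> fcl E lam k T A = fcl E lam k T D)"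
proof -
  let ?fcl = "fcl E lam k T"
  have B: "?fcl B = ?fcl (E - ?fcl A)"
    and C: "?fcl C = ?fcl (E - ?fcl D)"
    and D: "?fcl D = ?fcl (E - ?fcl C)"
    using non_sequential_fcl_eq[OF assms(1,2)] assms(3,4) non_sequential_sym[OF assms(1,4)]
    by blast+
  show ?thesis
    unfolding T_equivalent_def doubleton_eq_iff by (metis B C D)
qed

end
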